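(* For all $z\in\mathbb{C}\setminus[1,\infty)$, $$z^2\gamma(z)=(1-z)\,\mathrm{Li}_0'(z)-z\log(1-z).$$ If $|z|<1$, this relation can be written $$z\gamma(z)=-\log(1-z)-(1-z)\sum_{n=1}^{\infty} z^{n-1}\log n.$$
   Context: $\gamma(z)$ is the generalized-Euler-constant function: for $|z|\le1$, $\gamma(z)=\sum_{n=1}^{\infty} z^{n-1}\left(\frac{1}{n}-\log\frac{n+1}{n}\right)$, and for $z\in\mathbb{C}\setminus[1,\infty)$ it denotes the analytic continuation given by $\gamma(z)=\int_0^1\frac{1-x+\log x}{(1-xz)\log x}\,dx$. The extended polylogarithm $\mathrm{Li}_s(z)$ is the analytic continuation of the series $\sum_{n=1}^{\infty} z^n/n^s$ (which converges for every $s\in\mathbb{C}$ when $|z|<1$), and $\mathrm{Li}_0'(z)$ denotes $\frac{\partial}{\partial s}\mathrm{Li}_s(z)$ at $s=0$; for $|z|<1$, $\mathrm{Li}_0'(z)=-\sum_{n=1}^\infty z^n\log n$. $\log$ is the principal branch. *)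

theory Defs
  imports "HOL-Complex_Analysis.Complex_Analysis"
begin

definition slit_plane :: "complex set" where
  "slit_plane = - (complex_of_real ` {1..})"

text \<open>Generalized Euler constant function: the power series on the closed unit disc,
  the integral representation (its analytic continuation) elsewhere.\<close>
definition gen_euler_gamma :: "complex \<Rightarrow> complex" where
  "gen_euler_gamma z =
     (if norm z \<le> 1 then
        (\<Sum>n. z ^ n * (1 / of_nat (Suc n) - Ln (of_nat (Suc (Suc n)) / of_nat (Suc n))))
      else
        integral {0..1} (\<lambda>x::real. complex_of_real (1 - x + ln x) /
                                    ((1 - complex_of_real x * z) * complex_of_real (ln x))))"

text \<open>Extended polylogarithm Li_s(z): for each s, the analytic continuation (in z) to the
  slit plane of the series sum_{n>=1} z^n / n^s from the unit disc (unique, since the slit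
  plane is open and connected); set to 0 off the slit plane to make it well-defined.\<close>
definition polylog :: "complex \<Rightarrow> complex \<Rightarrow> complex" where
  "polylog s = (THE f. f holomorphic_on slit_plane \<and>
      (\<forall>z. norm z < 1 \<longrightarrow> f z = (\<Sum>n. z ^ Suc n / (of_nat (Suc n) powr s))) \<and>
      (\<forall>z. z \<notin> slit_plane \<longrightarrow> f z = 0))"

definition polylog0' :: "complex \<Rightarrow> complex" where
  "polylog0' z = deriv (\<lambda>s. polylog s z) 0"

end

theory Submission
  imports Defs "HOL-Real_Asymp.Real_Asymp"
begin

text \<open>
  For |s| < 1/4 and z in the slit plane,
    Li_s(z) = z/(1-z) - z^2/(1-z) Q_s(z) / Gamma(s),
    Q_s(z) = int_0^oo t^(s-1) e^(-t) (1 - e^(-t)) / (1 - z e^(-t)) dt.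
  On the unit disc this follows by expanding 1/(1 - z e^(-t)) into a geometric series, the
  n-th moment of the kernel being Gamma(s) ((n+1)^(-s) - (n+2)^(-s)); it persists on the slit
  plane because Q_s is holomorphic there. Since 1/Gamma has a simple zero at 0 with derivative
  1, differentiating in s at 0 gives Li_0'(z) = - z^2/(1-z) Q_0(z). On the other hand, the
  substitution x = e^(-t) in the integral defining gamma(z) (or termwise integration of its
  series on the closed disc) gives
    gamma(z) = int_0^oo e^(-t) / (1 - z e^(-t)) dt - Q_0(z) = - log(1-z)/z - Q_0(z).
  For |z| < 1 the moments at s = 0 are log((n+2)/(n+1)), so z Q_0(z) telescopes to
  (1 - z) sum_n z^n log(n+1).
\<close>

section \<open>The slit plane\<close>

lemma slit_plane_iff: "z \<in> slit_plane \<longleftrightarrow> Im z \<noteq> 0 \<or> Re z < 1"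
  by (auto simp: slit_plane_def complex_eq_iff image_iff intro!: bexI[of _ "Re z"])

lemma open_slit_plane: "open slit_plane"
proof -
  have "open ({z. Im z \<noteq> 0} \<union> {z. Re z < 1})"
    by (intro open_Un open_Collect_neq open_halfspace_Re_lt continuous_intros)
  moreover have "{z. Im z \<noteq> 0} \<union> {z. Re z < 1} = slit_plane"
    by (auto simp: slit_plane_iff)
  ultimately show ?thesis by simp
qed

lemma of_real_mult_in_slit_plane:
  assumes "z \<in> slit_plane" "x \<in> {0..1}"
  shows "of_real x * z \<in> slit_plane"
proof (cases "x = 0")
  case False
  with assms(2) have x: "0 < x" "x \<le> 1" by auto
  have "x * Re z < 1" if "Re z < 1"
  proof (cases "Re z \<le> 0")
    case False
    then have "x * Re z \<le> Re z" using x by (intro mult_left_le_one_le) auto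
    with that show ?thesis by linarith
  next
    case True
    then show ?thesis using x mult_nonneg_nonpos[of x "Re z"] by linarith
  qed
  with x assms(1) show ?thesis by (auto simp: slit_plane_iff)
qed (simp add: slit_plane_iff)

lemma connected_slit_plane: "connected slit_plane"
proof (rule starlike_imp_connected)
  have "closed_segment 0 z \<subseteq> slit_plane" if "z \<in> slit_plane" for z
    using of_real_mult_in_slit_plane[OF that] by (auto simp: closed_segment_def scaleR_conv_of_real)
  moreover have "0 \<in> slit_plane" by (simp add: slit_plane_iff)
  ultimately show "starlike slit_plane" unfolding starlike_def by blast
qed

lemma norm_less_one_in_slit_plane: "norm z < 1 \<Longrightarrow> z \<in> slit_plane"
  using complex_Re_le_cmod[of z] by (auto simp: slit_plane_iff)

lemma one_minus_in_nonpos_Reals_iff: "1 - z \<in> \<real>\<^sub>\<le>\<^sub>0 \<longleftrightarrow> z \<notin> slit_plane"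
  by (auto simp: complex_nonpos_Reals_iff slit_plane_iff)

lemma slit_plane_one_minus_nonzero: "z \<in> slit_plane \<Longrightarrow> 1 - z \<noteq> 0"
  by (auto simp: slit_plane_iff)

lemma slit_plane_locally_bounded_away_from_one:
  assumes "z0 \<in> slit_plane"
  obtains c r where "c > 0" "r > 0" "ball z0 r \<subseteq> slit_plane"
    "\<And>z t. z \<in> ball z0 r \<Longrightarrow> t \<ge> 0 \<Longrightarrow> c \<le> norm (1 - z * of_real (exp (-t)))"
proof -
  have "continuous_on {0..1::real} (\<lambda>x. norm (1 - of_real x * z0))"
    by (intro continuous_intros)
  from continuous_attains_inf[OF compact_Icc _ this]
  obtain x0 where x0: "x0 \<in> {0..1}"
    and min: "\<And>x. x \<in> {0..1} \<Longrightarrow> norm (1 - of_real x0 * z0) \<le> norm (1 - of_real x * z0)"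
    by auto
  define c where "c = norm (1 - of_real x0 * z0)"
  have "c > 0"
    using slit_plane_one_minus_nonzero[OF of_real_mult_in_slit_plane[OF assms x0]]
    by (simp add: c_def)
  obtain r where r: "r > 0" "ball z0 r \<subseteq> slit_plane"
    using open_slit_plane assms open_contains_ball by blast
  show ?thesis
  proof
    show "c / 2 > 0" "min r (c / 2) > 0" "ball z0 (min r (c / 2)) \<subseteq> slit_plane"
      using \<open>c > 0\<close> r by auto
    fix z and t :: real assume z: "z \<in> ball z0 (min r (c / 2))" and "t \<ge> 0"
    define x where "x = exp (-t)"
    have x: "x \<in> {0..1}" using \<open>t \<ge> 0\<close> by (simp add: x_def)
    have "norm (of_real x * (z - z0)) \<le> norm (z - z0)"
      using x by (auto simp: norm_mult intro: mult_left_le_one_le)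
    also have "\<dots> < c / 2" using z by (simp add: dist_norm norm_minus_commute)
    finally have "norm (of_real x * (z - z0)) < c / 2" .
    moreover have "c \<le> norm (1 - of_real x * z0)" using min[OF x] by (simp add: c_def)
    moreover have "norm (1 - of_real x * z0) - norm (of_real x * (z - z0)) \<le> norm (1 - of_real x * z)"
      using norm_triangle_ineq2[of "1 - of_real x * z0" "of_real x * (z - z0)"]
      by (simp add: algebra_simps)
    ultimately show "c / 2 \<le> norm (1 - z * of_real (exp (-t)))"
      by (simp add: x_def mult.commute)
  qed
qed

lemma slit_plane_exp_bounded_away_from_one:
  assumes "z \<in> slit_plane"
  obtains c where "c > 0" "\<And>t. t \<ge> 0 \<Longrightarrow> c \<le> norm (1 - z * of_real (exp (-t)))"
proof -
  obtain c r where "c > 0" "r > 0"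
    and "\<And>w t. w \<in> ball z r \<Longrightarrow> t \<ge> 0 \<Longrightarrow> c \<le> norm (1 - w * of_real (exp (-t)))"
    using slit_plane_locally_bounded_away_from_one[OF assms] by metis
  then show ?thesis using that by simp
qed

section \<open>Dominated convergence\<close>

lemma continuous_dominated_integrable_on:
  fixes f :: "'a::euclidean_space \<Rightarrow> 'b::euclidean_space"
  assumes "continuous_on S f" "S \<in> sets lebesgue" "g integrable_on S"
    and "\<And>x. x \<in> S \<Longrightarrow> norm (f x) \<le> g x"
  shows "f integrable_on S"
proof -
  have "f \<in> borel_measurable (lebesgue_on S)"
    using assms(1,2) by (rule continuous_imp_measurable_on_sets_lebesgue)
  then have "f absolutely_integrable_on S"
    using assms(2-4) by (rule measurable_bounded_by_integrable_imp_absolutely_integrable)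
  then show ?thesis by (simp add: absolutely_integrable_on_def)
qed

lemma tendsto_integral_dominated_at:
  fixes f :: "'a::first_countable_topology \<Rightarrow> 'n::euclidean_space \<Rightarrow> 'm::euclidean_space"
  assumes ev: "eventually (\<lambda>p. f p integrable_on S \<and> (\<forall>x\<in>S. norm (f p x) \<le> g x)) (at p0)"
    and g: "g integrable_on S"
    and lim: "\<And>x. x \<in> S \<Longrightarrow> ((\<lambda>p. f p x) \<longlongrightarrow> l x) (at p0)"
  shows "((\<lambda>p. integral S (f p)) \<longlongrightarrow> integral S l) (at p0)"
  unfolding tendsto_at_iff_sequentially
proof (intro allI impI)
  fix X :: "nat \<Rightarrow> 'a" assume "\<forall>i. X i \<in> UNIV - {p0}" "X \<longlonglongrightarrow> p0"
  then have X: "filterlim X (at p0) sequentially"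
    by (auto simp: filterlim_at)
  obtain N where N: "\<And>n. n \<ge> N \<Longrightarrow> f (X n) integrable_on S \<and> (\<forall>x\<in>S. norm (f (X n) x) \<le> g x)"
    using filterlim_iff[THEN iffD1, OF X, rule_format, OF ev] by (auto simp: eventually_sequentially)
  have "(\<lambda>n. integral S (f (X (n + N)))) \<longlonglongrightarrow> integral S l"
  proof (rule dominated_convergence(2)[OF _ g])
    fix n x
    show "f (X (n + N)) integrable_on S" using N[of "n + N"] by simp
    assume "x \<in> S"
    then show "norm (f (X (n + N)) x) \<le> g x" using N[of "n + N"] by simp
    show "(\<lambda>n. f (X (n + N)) x) \<longlonglongrightarrow> l x"
      using filterlim_compose[OF lim[OF \<open>x \<in> S\<close>] X] by (rule LIMSEQ_ignore_initial_segment)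
  qed
  then show "((\<lambda>p. integral S (f p)) \<circ> X) \<longlonglongrightarrow> integral S l"
    unfolding o_def by (rule LIMSEQ_offset)
qed

lemma has_field_derivative_integral_dominated:
  fixes F F' :: "complex \<Rightarrow> 'n::euclidean_space \<Rightarrow> complex"
  assumes r: "r > 0"
    and int: "\<And>p. p \<in> ball p0 r \<Longrightarrow> F p integrable_on S"
    and der: "\<And>p x. p \<in> ball p0 r \<Longrightarrow> x \<in> S \<Longrightarrow> ((\<lambda>p. F p x) has_field_derivative F' p x) (at p)"
    and g: "g integrable_on S"
    and bound: "\<And>p x. p \<in> ball p0 r \<Longrightarrow> x \<in> S \<Longrightarrow> norm (F' p x) \<le> g x"
  shows "((\<lambda>p. integral S (F p)) has_field_derivative integral S (F' p0)) (at p0)"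
proof -
  define Q where "Q = (\<lambda>p x. (F p x - F p0 x) / (p - p0))"
  have p0: "p0 \<in> ball p0 r" using r by simp
  have near: "eventually (\<lambda>p. p \<in> ball p0 r \<and> p \<noteq> p0) (at p0)"
    using eventually_at_in_open'[OF open_ball p0] eventually_neq_at_within[of p0 p0 UNIV]
    by eventually_elim auto
  then have "eventually (\<lambda>p. Q p integrable_on S \<and> (\<forall>x\<in>S. norm (Q p x) \<le> g x)) (at p0)"
  proof eventually_elim
    case (elim p)
    have "norm (F p x - F p0 x) \<le> g x * norm (p - p0)" if "x \<in> S" for x
      using field_differentiable_bound[of "ball p0 r" "\<lambda>p. F p x" "\<lambda>p. F' p x" "g x" p p0]
        elim p0 der bound that by (auto intro: has_field_derivative_at_within)
    then have "norm (Q p x) \<le> g x" if "x \<in> S" for x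
      using elim that by (simp add: Q_def norm_divide pos_divide_le_eq)
    moreover have "Q p integrable_on S"
      unfolding Q_def divide_inverse
      using int elim p0 by (intro integrable_on_mult_left integrable_diff) auto
    ultimately show ?case by blast
  qed
  moreover have "((\<lambda>p. Q p x) \<longlongrightarrow> F' p0 x) (at p0)" if "x \<in> S" for x
    using der[OF p0 that] by (simp add: has_field_derivative_iff Q_def)
  ultimately have "((\<lambda>p. integral S (Q p)) \<longlongrightarrow> integral S (F' p0)) (at p0)"
    by (rule tendsto_integral_dominated_at[OF _ g])
  moreover have "eventually (\<lambda>p. integral S (Q p) = (integral S (F p) - integral S (F p0)) / (p - p0)) (at p0)"
    using near
  proof eventually_elim
    case (elim p)
    then show ?case
      using integral_diff[OF int int[OF p0], of p] by (simp add: Q_def)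
  qed
  ultimately show ?thesis
    unfolding has_field_derivative_iff by (rule Lim_transform_eventually)
qed

lemma sums_integral_dominated:
  fixes f :: "nat \<Rightarrow> 'n::euclidean_space \<Rightarrow> 'm::euclidean_space"
  assumes f: "\<And>n. f n integrable_on S" and g: "g integrable_on S"
    and bound: "\<And>N x. x \<in> S \<Longrightarrow> norm (\<Sum>n<N. f n x) \<le> g x"
    and sums: "\<And>x. x \<in> S \<Longrightarrow> (\<lambda>n. f n x) sums h x"
  shows "(\<lambda>n. integral S (f n)) sums integral S h"
proof -
  have "(\<lambda>N. integral S (\<lambda>x. \<Sum>n<N. f n x)) \<longlonglongrightarrow> integral S h"
    using sums by (intro dominated_convergence(2)[OF _ g bound]) (auto simp: sums_def f intro!: integrable_sum)
  then show ?thesis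
    unfolding sums_def by (simp add: integral_sum f)
qed

lemma norm_sum_power_le:
  fixes q :: "'a::real_normed_field"
  assumes "norm q \<le> 1" "c > 0" "c \<le> norm (1 - q)"
  shows "norm (\<Sum>n<N. q ^ n) \<le> 2 / c"
proof -
  have "q \<noteq> 1" using assms(2,3) by auto
  then have "(\<Sum>n<N. q ^ n) = (1 - q ^ N) / (1 - q)" by (simp add: sum_gp_strict)
  moreover have "norm (1 - q ^ N) \<le> 2"
    using norm_triangle_ineq4[of 1 "q ^ N"] power_le_one[OF norm_ge_zero assms(1), of N]
    by (simp add: norm_power)
  ultimately show ?thesis using assms(2,3) by (simp add: norm_divide frac_le)
qed

lemma sums_integral_geometric:
  fixes \<omega> q :: "'n::euclidean_space \<Rightarrow> complex"
  assumes S: "S \<in> sets lebesgue"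
    and \<omega>: "continuous_on S \<omega>" and g: "g integrable_on S" and bound: "\<And>x. x \<in> S \<Longrightarrow> norm (\<omega> x) \<le> g x"
    and q: "continuous_on S q" "\<And>x. x \<in> S \<Longrightarrow> norm (q x) < 1"
    and c: "c > 0" "\<And>x. x \<in> S \<Longrightarrow> c \<le> norm (1 - q x)"
  shows "(\<lambda>n. integral S (\<lambda>x. \<omega> x * q x ^ n)) sums integral S (\<lambda>x. \<omega> x / (1 - q x))"
proof (rule sums_integral_dominated[where g = "\<lambda>x. 2 / c * g x"])
  show "(\<lambda>x. 2 / c * g x) integrable_on S"
    using g by (rule integrable_on_mult_right)
next
  fix n
  have "norm (\<omega> x * q x ^ n) \<le> g x" if "x \<in> S" for x
  proof -
    have "norm (\<omega> x) * norm (q x) ^ n \<le> norm (\<omega> x)"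
      using q(2)[OF that] by (intro mult_right_le_one_le power_le_one) auto
    then show ?thesis using bound[OF that] by (simp add: norm_mult norm_power)
  qed
  then show "(\<lambda>x. \<omega> x * q x ^ n) integrable_on S"
    by (intro continuous_dominated_integrable_on[OF _ S g] continuous_intros \<omega> q)
next
  fix N x assume x: "x \<in> S"
  have "norm (\<omega> x) * norm (\<Sum>n<N. q x ^ n) \<le> g x * (2 / c)"
    using bound[OF x] order_trans[OF norm_ge_zero bound[OF x]] c(1) c(2)[OF x] q(2)[OF x]
    by (intro mult_mono norm_sum_power_le) auto
  then show "norm (\<Sum>n<N. \<omega> x * q x ^ n) \<le> 2 / c * g x"
    by (simp add: norm_mult mult.commute flip: sum_distrib_left)
next
  fix x assume "x \<in> S"
  then show "(\<lambda>n. \<omega> x * q x ^ n) sums (\<omega> x / (1 - q x))"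
    using sums_mult[OF geometric_sums[OF q(2)], where c = "\<omega> x"] by (simp add: field_simps)
qed

section \<open>Integrals over a half-line\<close>

lemma has_integral_atLeast_iff_greaterThan:
  fixes f :: "real \<Rightarrow> 'a::banach"
  shows "(f has_integral y) {a..} \<longleftrightarrow> (f has_integral y) {a<..}"
  by (rule has_integral_spike_set_eq; rule negligible_subset[of "{a}"]) auto

lemma integrable_on_atLeast_iff_greaterThan:
  fixes f :: "real \<Rightarrow> 'a::banach"
  shows "f integrable_on {a..} \<longleftrightarrow> f integrable_on {a<..}"
  using has_integral_atLeast_iff_greaterThan unfolding integrable_on_def by blast

lemma integral_greaterThan_0_eq_limit:
  fixes h :: "real \<Rightarrow> 'a::euclidean_space"
  assumes h: "\<And>b. h integrable_on {0..b}" and g: "g integrable_on {0<..}"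
    and bound: "\<And>t. t > 0 \<Longrightarrow> norm (h t) \<le> g t"
  shows "h integrable_on {0<..}" "(\<lambda>k. integral {0..real k} h) \<longlonglongrightarrow> integral {0<..} h"
proof -
  define f where "f = (\<lambda>k t. if t \<in> {0..real k} then h t else 0)"
  have f_int: "(f k has_integral integral {0..real k} h) {0<..}" for k
  proof -
    have "(h has_integral integral {0..real k} h) {0..real k}"
      using h by (rule integrable_integral)
    moreover have "(h has_integral integral {0..real k} h) {0..real k} \<longleftrightarrow>
        (h has_integral integral {0..real k} h) ({0..real k} \<inter> {0<..})"
      by (rule has_integral_spike_set_eq; rule negligible_subset[of "{0}"]) auto
    ultimately have "(h has_integral integral {0..real k} h) ({0..real k} \<inter> {0<..})"
      by blast
    then show ?thesis by (simp only: f_def has_integral_restrict_Int)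
  qed
  have f_bound: "norm (f k t) \<le> g t" if "t \<in> {0<..}" for k t
    using bound[of t] order_trans[OF norm_ge_zero bound[of t]] that by (auto simp: f_def)
  have f_lim: "(\<lambda>k. f k t) \<longlonglongrightarrow> h t" if "t \<in> {0<..}" for t
  proof (rule tendsto_eventually)
    obtain n where "t \<le> real n" using real_arch_simple by blast
    then show "eventually (\<lambda>k. f k t = h t) sequentially"
      using that by (auto simp: f_def eventually_sequentially intro!: exI[of _ n])
  qed
  show "h integrable_on {0<..}"
    using f_int by (intro dominated_convergence(1)[OF _ g f_bound f_lim]) blast+
  have "(\<lambda>k. integral {0<..} (f k)) \<longlonglongrightarrow> integral {0<..} h"
    using f_int by (intro dominated_convergence(2)[OF _ g f_bound f_lim]) blast+
  moreover have "integral {0<..} (f k) = integral {0..real k} h" for k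
    using f_int by (rule integral_unique)
  ultimately show "(\<lambda>k. integral {0..real k} h) \<longlonglongrightarrow> integral {0<..} h"
    by simp
qed

lemma has_integral_exp_neg_substitution_interval:
  fixes F :: "real \<Rightarrow> 'a::euclidean_space"
  assumes F: "continuous_on {0..1} F" and b: "b > 0"
  shows "((\<lambda>t. exp (-t) *\<^sub>R F (exp (-t))) has_integral integral {exp (-b)..1} F) {0..b}"
proof -
  have "((\<lambda>t. (- exp (-t)) *\<^sub>R F (exp (-t))) has_integral
          integral {exp (-0)..exp (-b)} F - integral {exp (-b)..exp (-0)} F) {0..b}"
    by (rule has_integral_substitution_general[of "{}" 0 b "\<lambda>t. exp (-t)" 0 1 F])
       (use b in \<open>auto intro!: continuous_intros derivative_eq_intros F\<close>)
  then have "((\<lambda>t. - (exp (-t) *\<^sub>R F (exp (-t)))) has_integral - integral {exp (-b)..1} F) {0..b}"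
    using b by simp
  then show ?thesis by (simp add: has_integral_neg_iff)
qed

lemma has_integral_exp_neg_substitution:
  fixes F :: "real \<Rightarrow> 'a::euclidean_space"
  assumes F: "continuous_on {0..1} F"
  shows "((\<lambda>t. exp (-t) *\<^sub>R F (exp (-t))) has_integral integral {0..1} F) {0<..}"
proof -
  define h where "h = (\<lambda>t. exp (-t) *\<^sub>R F (exp (-t)))"
  obtain B where B: "\<forall>x\<in>{0..1}. norm (F x) \<le> B"
    using compact_imp_bounded[OF compact_continuous_image[OF F compact_Icc]]
    by (auto simp: bounded_iff)
  have "continuous_on {0..} h"
    unfolding h_def by (intro continuous_intros continuous_on_compose2[OF F]) auto
  then have h_int: "h integrable_on {0..b}" for b
    by (rule integrable_continuous_interval[OF continuous_on_subset]) auto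
  have g: "(\<lambda>t. B * exp (-t)) integrable_on {0<..}"
    using integrable_on_mult_right[OF integrable_on_exp_minus_to_infinity[of 1 0], of B]
    by (simp add: integrable_on_atLeast_iff_greaterThan)
  have "norm (h t) \<le> B * exp (-t)" if "t > 0" for t
    using B that by (simp add: h_def mult.commute)
  note limit = integral_greaterThan_0_eq_limit[OF h_int g this]
  have "(\<lambda>k. integral {0..real (Suc k)} h) \<longlonglongrightarrow> integral {0..1} F"
  proof -
    have "continuous_on {0..1} (\<lambda>x. integral {x..1} F)"
      by (rule indefinite_integral_continuous_1'[OF integrable_continuous_real[OF F]])
    moreover have "(\<lambda>k. exp (- real (Suc k))) \<longlonglongrightarrow> 0" by real_asymp
    ultimately have "(\<lambda>k. integral {exp (- real (Suc k))..1} F) \<longlonglongrightarrow> integral {0..1} F"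
      by (rule continuous_on_tendsto_compose) auto
    moreover have "integral {0..real (Suc k)} h = integral {exp (- real (Suc k))..1} F" for k
      unfolding h_def by (rule integral_unique[OF has_integral_exp_neg_substitution_interval[OF F]]) simp
    ultimately show ?thesis by simp
  qed
  moreover have "(\<lambda>k. integral {0..real (Suc k)} h) \<longlonglongrightarrow> integral {0<..} h"
    using limit(2) by (rule LIMSEQ_Suc)
  ultimately have "integral {0<..} h = integral {0..1} F"
    using LIMSEQ_unique by blast
  then show ?thesis
    using integrable_integral[OF limit(1)] by (simp add: h_def)
qed

lemma has_integral_exp_neg_mult_exp: 
  "((\<lambda>t. of_real (exp (-t)) * of_real (exp (- (real n * t))) :: complex) has_integral 1 / of_nat (Suc n)) {0<..}"
proof -
  have "((\<lambda>t. exp (- real (Suc n) * t)) has_integral 1 / real (Suc n)) {0..}"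
    using has_integral_exp_minus_to_infinity[of "real (Suc n)" 0] by simp
  then have "((\<lambda>t. complex_of_real (exp (- real (Suc n) * t))) has_integral of_real (1 / real (Suc n))) {0..}"
    using has_integral_linear[OF _ bounded_linear_of_real] by (simp only: o_def)
  then have "((\<lambda>t. complex_of_real (exp (- real (Suc n) * t))) has_integral 1 / of_nat (Suc n)) {0<..}"
    by (simp add: has_integral_atLeast_iff_greaterThan)
  moreover have "exp (- real (Suc n) * t) = exp (-t) * exp (- (real n * t))" for t
    by (simp add: algebra_simps flip: exp_add)
  ultimately show ?thesis by simp
qed

lemma sums_integral_geometric_exp:
  fixes \<omega> :: "real \<Rightarrow> complex"
  assumes \<omega>: "continuous_on {0<..} \<omega>" and g: "g integrable_on {0<..}"
    and bound: "\<And>t. t > 0 \<Longrightarrow> norm (\<omega> t) \<le> g t"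
    and z: "z \<in> slit_plane" "norm z \<le> 1"
  shows "(\<lambda>n. z ^ n * integral {0<..} (\<lambda>t. \<omega> t * of_real (exp (- (real n * t))))) sums
           integral {0<..} (\<lambda>t. \<omega> t / (1 - z * of_real (exp (-t))))"
proof -
  obtain c where c: "c > 0" "\<And>t. t \<ge> 0 \<Longrightarrow> c \<le> norm (1 - z * of_real (exp (-t)))"
    using slit_plane_exp_bounded_away_from_one[OF z(1)] by blast
  have "norm (z * of_real (exp (-t))) < 1" if "t > 0" for t
  proof -
    have "norm (z * of_real (exp (-t))) \<le> exp (-t)"
      using z(2) by (simp add: norm_mult mult_left_le_one_le)
    also have "\<dots> < 1" using that by simp
    finally show ?thesis .
  qed
  with c have "(\<lambda>n. integral {0<..} (\<lambda>t. \<omega> t * (z * of_real (exp (-t))) ^ n)) sums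
      integral {0<..} (\<lambda>t. \<omega> t / (1 - z * of_real (exp (-t))))"
    by (intro sums_integral_geometric[where g = g and c = c] \<omega> g bound continuous_intros) auto
  moreover have "\<omega> t * (z * of_real (exp (-t))) ^ n = z ^ n * (\<omega> t * of_real (exp (- (real n * t))))" for n t
    using exp_of_nat_mult[of n "-t"] by (simp add: power_mult_distrib)
  ultimately show ?thesis by simp
qed

lemma has_integral_greaterThan_0_scale:
  fixes f :: "real \<Rightarrow> 'a::euclidean_space"
  assumes f: "f absolutely_integrable_on {0<..}" and m: "m > 0"
  shows "((\<lambda>x. f (m * x)) has_integral integral {0<..} f /\<^sub>R m) {0<..}"
proof -
  define G where "G = (\<lambda>x. indicator {0<..} x *\<^sub>R f x)"
  have "has_bochner_integral lebesgue G (integral {0<..} f)"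
    using f set_lebesgue_integral_eq_integral(2)[OF f]
    by (simp add: has_bochner_integral_iff set_integrable_def set_lebesgue_integral_def G_def)
  then have "has_bochner_integral lebesgue (\<lambda>x. G (0 + m * x)) (integral {0<..} f /\<^sub>R m)"
    using m has_bochner_integral_lebesgue_real_affine_iff[of m G _ 0] by simp
  moreover have "G (0 + m * x) = indicator {0<..} x *\<^sub>R f (m * x)" for x
    using m by (simp add: G_def indicator_def zero_less_mult_iff)
  ultimately have "set_integrable lebesgue {0<..} (\<lambda>x. f (m * x))"
    and "(LINT x:{0<..}|lebesgue. f (m * x)) = integral {0<..} f /\<^sub>R m"
    by (simp_all add: has_bochner_integral_iff set_integrable_def set_lebesgue_integral_def)
  then show ?thesis
    using has_integral_set_lebesgue by metis
qed

lemma has_integral_powr_exp_scaled: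
  assumes s: "Re s > 0" and m: "m > 0"
  shows "((\<lambda>t. of_real t powr (s - 1) * of_real (exp (- (m * t)))) has_integral
           Gamma s / of_real m powr s) {0<..}"
proof -
  define f where "f = (\<lambda>t::real. of_real t powr (s - 1) / of_real (exp t))"
  have "((\<lambda>t. f (m * t)) has_integral Gamma s /\<^sub>R m) {0<..}"
    using has_integral_greaterThan_0_scale[OF _ m, of f] absolutely_integrable_Gamma_integral'[OF s]
      integral_unique[OF Gamma_integral_complex'[OF s]]
    by (simp add: f_def)
  then have "((\<lambda>t. of_real m powr (1 - s) * f (m * t)) has_integral
               of_real m powr (1 - s) * (Gamma s /\<^sub>R m)) {0<..}"
    by (rule has_integral_mult_right)
  moreover have "of_real m powr (1 - s) * (Gamma s /\<^sub>R m) = Gamma s / of_real m powr s"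
    using m by (simp add: powr_diff scaleR_conv_of_real field_simps)
  moreover have "of_real m powr (1 - s) * f (m * t) = of_real t powr (s - 1) * of_real (exp (- (m * t)))"
    if "t \<in> {0<..}" for t
  proof -
    have "of_real m powr (1 - s) * of_real m powr (s - 1) = (1 :: complex)"
      using m by (simp flip: powr_add)
    then show ?thesis
      using m that by (simp add: f_def powr_times_real exp_minus field_simps)
  qed
  ultimately show ?thesis
    using has_integral_cong by (metis (no_types, lifting))
qed

section \<open>The kernel t^(s-1) e^(-t) (1 - e^(-t))\<close>

definition polylog_kernel :: "complex \<Rightarrow> real \<Rightarrow> complex" where
  "polylog_kernel s t = of_real t powr (s - 1) * of_real (exp (-t) * (1 - exp (-t)))"

text \<open>This is (t^(-1/4) + t^(1/4))^2 e^(-t); for |s| \<le> 1/4 it dominates the kernel and,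
  up to the factor 4, its derivative in s.\<close>
definition kernel_majorant :: "real \<Rightarrow> real" where
  "kernel_majorant t = (t powr (-1/2) + 2 + t powr (1/2)) * exp (-t)"

lemma kernel_majorant_nonneg: "kernel_majorant t \<ge> 0"
  by (simp add: kernel_majorant_def)

lemma kernel_majorant_integrable: "kernel_majorant integrable_on {0<..}"
proof -
  have "(\<lambda>t::real. t powr (1/2 - 1) / exp t) integrable_on {0..}"
    "(\<lambda>t::real. t powr (3/2 - 1) / exp t) integrable_on {0..}"
    using Gamma_integral_real[of "1/2"] Gamma_integral_real[of "3/2"] by (auto simp: integrable_on_def)
  moreover have "(\<lambda>t::real. exp (- 1 * t)) integrable_on {0..}"
    by (rule integrable_on_exp_minus_to_infinity) simp
  ultimately have "(\<lambda>t::real. t powr (1/2 - 1) / exp t + 2 * exp (- 1 * t) + t powr (3/2 - 1) / exp t)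
      integrable_on {0..}"
    by (intro integrable_add integrable_on_mult_right)
  also have "(\<lambda>t::real. t powr (1/2 - 1) / exp t + 2 * exp (- 1 * t) + t powr (3/2 - 1) / exp t) =
      kernel_majorant"
    by (auto simp: kernel_majorant_def fun_eq_iff field_simps exp_minus)
  finally show ?thesis by (simp add: integrable_on_atLeast_iff_greaterThan)
qed

lemma kernel_majorant_eq:
  assumes "t > 0"
  shows "kernel_majorant t = (t powr (-1/4) + t powr (1/4))^2 * exp (-t)"
proof -
  have "t powr (-1/4) * t powr (1/4) = 1" "t powr (-1/4) * t powr (-1/4) = t powr (-1/2)"
    "t powr (1/4) * t powr (1/4) = t powr (1/2)"
    using assms by (simp_all flip: powr_add)
  then show ?thesis
    by (simp add: kernel_majorant_def power2_eq_square algebra_simps)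
qed

lemma one_le_quarter_powr_sum:
  fixes t :: real
  assumes "t > 0"
  shows "1 \<le> t powr (-1/4) + t powr (1/4)"
proof (cases "t \<le> 1")
  case True
  then have "t powr 0 \<le> t powr (-1/4)" using assms by (intro powr_mono') auto
  then show ?thesis using assms powr_ge_zero[of t "1/4"] by (simp del: powr_ge_zero)
next
  case False
  then have "t powr 0 \<le> t powr (1/4)" by (intro powr_mono) auto
  then show ?thesis using assms powr_ge_zero[of t "-1/4"] by (simp del: powr_ge_zero)
qed

lemma powr_le_quarter_powr_sum:
  fixes t \<sigma> :: real
  assumes "t > 0" "\<bar>\<sigma>\<bar> \<le> 1/4"
  shows "t powr \<sigma> \<le> t powr (-1/4) + t powr (1/4)"
proof (cases "t \<le> 1")
  case True
  then have "t powr \<sigma> \<le> t powr (-1/4)" using assms by (intro powr_mono') auto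
  then show ?thesis using powr_ge_zero[of t "1/4"] by linarith
next
  case False
  then have "t powr \<sigma> \<le> t powr (1/4)" using assms by (intro powr_mono) auto
  then show ?thesis using powr_ge_zero[of t "-1/4"] by linarith
qed

lemma abs_ln_le_quarter_powr_sum:
  fixes t :: real
  assumes "t > 0"
  shows "\<bar>ln t\<bar> \<le> 4 * (t powr (-1/4) + t powr (1/4))"
proof (cases "t \<ge> 1")
  case True
  have "ln (t powr (1/4)) \<le> t powr (1/4) - 1" using assms by (intro ln_le_minus_one) auto
  moreover have "ln (t powr (1/4)) = ln t / 4" using assms by (simp add: ln_powr)
  ultimately show ?thesis using True powr_ge_zero[of t "-1/4"] by (simp del: powr_ge_zero)
next
  case False
  have "ln (t powr (-1/4)) \<le> t powr (-1/4) - 1" using assms by (intro ln_le_minus_one) auto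
  moreover have "ln (t powr (-1/4)) = - ln t / 4" using assms by (simp add: ln_powr)
  ultimately show ?thesis using False assms powr_ge_zero[of t "1/4"] by (simp del: powr_ge_zero)
qed

lemma exp_le_kernel_majorant:
  assumes "t > 0"
  shows "exp (-t) \<le> kernel_majorant t"
  using one_le_power[OF one_le_quarter_powr_sum[OF assms], of 2] kernel_majorant_eq[OF assms]
  by simp

lemma norm_polylog_kernel_le:
  assumes t: "t > 0" and s: "\<bar>Re s\<bar> \<le> 1/4"
  shows "norm (polylog_kernel s t) \<le> (t powr (-1/4) + t powr (1/4)) * exp (-t)"
proof -
  have "exp (-t) * (1 - exp (-t)) \<ge> 0" using t by simp
  then have "norm (polylog_kernel s t) = t powr (Re s - 1) * (1 - exp (-t)) * exp (-t)"
    unfolding polylog_kernel_def norm_mult norm_of_real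
    using t by (simp add: norm_powr_real_powr)
  also have "\<dots> \<le> t powr (Re s - 1) * t * exp (-t)"
    using exp_ge_add_one_self[of "-t"] by (intro mult_right_mono mult_left_mono) auto
  also have "\<dots> = t powr Re s * exp (-t)"
    using t by (simp add: powr_diff)
  also have "\<dots> \<le> (t powr (-1/4) + t powr (1/4)) * exp (-t)"
    using powr_le_quarter_powr_sum[OF t s] by (intro mult_right_mono) auto
  finally show ?thesis .
qed

lemma norm_polylog_kernel_le_majorant:
  assumes t: "t > 0" and s: "norm s \<le> 1/4"
  shows "norm (polylog_kernel s t) \<le> kernel_majorant t"
proof -
  let ?P = "t powr (-1/4) + t powr (1/4)"
  have "\<bar>Re s\<bar> \<le> 1/4" using abs_Re_le_cmod[of s] s by linarith
  then have "norm (polylog_kernel s t) \<le> ?P * exp (-t)" by (rule norm_polylog_kernel_le[OF t])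
  also have "\<dots> \<le> ?P^2 * exp (-t)"
    using one_le_quarter_powr_sum[OF t] by (intro mult_right_mono) (auto simp: power2_eq_square)
  finally show ?thesis by (simp add: kernel_majorant_eq[OF t])
qed

lemma norm_ln_mult_polylog_kernel_le_majorant:
  assumes t: "t > 0" and s: "norm s \<le> 1/4"
  shows "norm (of_real (ln t) * polylog_kernel s t) \<le> 4 * kernel_majorant t"
proof -
  let ?P = "t powr (-1/4) + t powr (1/4)"
  have "\<bar>Re s\<bar> \<le> 1/4" using abs_Re_le_cmod[of s] s by linarith
  then have "\<bar>ln t\<bar> * norm (polylog_kernel s t) \<le> (4 * ?P) * (?P * exp (-t))"
    using abs_ln_le_quarter_powr_sum[OF t] norm_polylog_kernel_le[OF t] by (intro mult_mono) auto
  also have "\<dots> = 4 * kernel_majorant t"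
    by (simp add: kernel_majorant_eq[OF t] power2_eq_square mult_ac)
  finally show ?thesis by (simp add: norm_mult)
qed

lemma continuous_on_polylog_kernel: "continuous_on {0<..} (polylog_kernel s)"
  unfolding polylog_kernel_def by (auto intro!: continuous_intros)

lemma integrable_polylog_kernel_mult:
  assumes s: "norm s \<le> 1/4"
    and k: "continuous_on {0<..} k" "\<And>t. t > 0 \<Longrightarrow> norm (k t) \<le> K"
  shows "(\<lambda>t. polylog_kernel s t * k t) integrable_on {0<..}"
proof (rule continuous_dominated_integrable_on[where g = "\<lambda>t. K * kernel_majorant t"])
  show "(\<lambda>t. K * kernel_majorant t) integrable_on {0<..}"
    using kernel_majorant_integrable by (rule integrable_on_mult_right)
  fix t :: real assume t: "t \<in> {0<..}"
  then have "norm (polylog_kernel s t) * norm (k t) \<le> kernel_majorant t * K"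
    using norm_polylog_kernel_le_majorant[OF _ s] k(2) kernel_majorant_nonneg by (intro mult_mono) auto
  then show "norm (polylog_kernel s t * k t) \<le> K * kernel_majorant t"
    by (simp add: norm_mult mult.commute)
qed (auto intro!: continuous_intros continuous_on_polylog_kernel k(1))

lemma has_field_derivative_polylog_kernel:
  assumes "t > 0"
  shows "((\<lambda>s. polylog_kernel s t) has_field_derivative of_real (ln t) * polylog_kernel s t) (at s)"
proof -
  have "((\<lambda>s. of_real t powr s) has_field_derivative Ln (of_real t) * of_real t powr (s - 1)) (at (s - 1))"
    using assms by (intro has_field_derivative_powr_right) simp
  moreover have "((\<lambda>s. s - 1) has_field_derivative 1) (at s)"
    by (auto intro!: derivative_eq_intros)
  ultimately have "((\<lambda>s. of_real t powr (s - 1)) has_field_derivative Ln (of_real t) * of_real t powr (s - 1)) (at s)"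
    by (metis DERIV_chain2 mult_1_right)
  then have "((\<lambda>s. of_real t powr (s - 1) * of_real (exp (-t) * (1 - exp (-t)))) has_field_derivative
      Ln (of_real t) * of_real t powr (s - 1) * of_real (exp (-t) * (1 - exp (-t)))) (at s)"
    by (rule DERIV_cmult_right)
  then show ?thesis
    using assms by (simp add: polylog_kernel_def Ln_of_real mult.assoc)
qed

lemma polylog_kernel_integral_field_differentiable:
  assumes k: "continuous_on {0<..} k" "\<And>t. t > 0 \<Longrightarrow> norm (k t) \<le> K" and s0: "norm s0 < 1/4"
  shows "(\<lambda>s. integral {0<..} (\<lambda>t. polylog_kernel s t * k t)) field_differentiable at s0"
proof -
  define r where "r = 1/4 - norm s0"
  have r: "r > 0" using s0 by (simp add: r_def)
  have s: "norm s \<le> 1/4" if "s \<in> ball s0 r" for s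
    using that norm_triangle_ineq2[of s s0] by (simp add: r_def dist_norm norm_minus_commute)
  have "((\<lambda>s. integral {0<..} (\<lambda>t. polylog_kernel s t * k t)) has_field_derivative
          integral {0<..} (\<lambda>t. of_real (ln t) * polylog_kernel s0 t * k t)) (at s0)"
  proof (rule has_field_derivative_integral_dominated[OF r, where g = "\<lambda>t. 4 * K * kernel_majorant t"])
    show "(\<lambda>t. 4 * K * kernel_majorant t) integrable_on {0<..}"
      using kernel_majorant_integrable by (rule integrable_on_mult_right)
  next
    fix s assume "s \<in> ball s0 r"
    then show "(\<lambda>t. polylog_kernel s t * k t) integrable_on {0<..}"
      using integrable_polylog_kernel_mult[OF s k] by blast
  next
    fix s and t :: real assume "s \<in> ball s0 r" "t \<in> {0<..}"
    then show "((\<lambda>s. polylog_kernel s t * k t) has_field_derivative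
                 of_real (ln t) * polylog_kernel s t * k t) (at s)"
      using has_field_derivative_polylog_kernel[of t] by (auto intro: DERIV_cmult_right)
    have "norm (of_real (ln t) * polylog_kernel s t) * norm (k t) \<le> (4 * kernel_majorant t) * K"
      using norm_ln_mult_polylog_kernel_le_majorant[of t s] s[OF \<open>s \<in> ball s0 r\<close>] k(2)[of t]
        \<open>t \<in> {0<..}\<close> kernel_majorant_nonneg[of t] by (intro mult_mono) auto
    then show "norm (of_real (ln t) * polylog_kernel s t * k t) \<le> 4 * K * kernel_majorant t"
      by (simp add: norm_mult mult_ac)
  qed
  then show ?thesis unfolding field_differentiable_def by blast
qed

lemma polylog_kernel_0:
  assumes "t > 0"
  shows "polylog_kernel 0 t = of_real (exp (-t) * (1 - exp (-t)) / t)"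
proof -
  have "(of_real t :: complex) powr (0 - 1) = of_real t powr (of_int (-1))" by simp
  also have "\<dots> = inverse (of_real t)" using assms by (subst powr_of_int) auto
  finally show ?thesis by (simp add: polylog_kernel_def field_simps)
qed

section \<open>Moments of the kernel\<close>

definition kernel_moment :: "complex \<Rightarrow> nat \<Rightarrow> complex" where
  "kernel_moment s n = integral {0<..} (\<lambda>t. polylog_kernel s t * of_real (exp (- (real n * t))))"

lemma kernel_moment_eq_Gamma:
  assumes s: "Re s > 0"
  shows "kernel_moment s n = Gamma s / of_nat (Suc n) powr s - Gamma s / of_nat (Suc (Suc n)) powr s"
proof -
  have "polylog_kernel s t * of_real (exp (- (real n * t))) =
          of_real t powr (s - 1) * of_real (exp (- (real (Suc n) * t))) -
          of_real t powr (s - 1) * of_real (exp (- (real (Suc (Suc n)) * t)))" for t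
  proof -
    have "exp (- (real (Suc n) * t)) = exp (-t) * exp (- (real n * t))"
      "exp (- (real (Suc (Suc n)) * t)) = exp (-t) * exp (-t) * exp (- (real n * t))"
      by (simp_all add: algebra_simps flip: exp_add)
    then show ?thesis by (simp add: polylog_kernel_def algebra_simps)
  qed
  moreover have "((\<lambda>t. of_real t powr (s - 1) * of_real (exp (- (real (Suc n) * t))) -
                     of_real t powr (s - 1) * of_real (exp (- (real (Suc (Suc n)) * t))))
      has_integral Gamma s / of_nat (Suc n) powr s - Gamma s / of_nat (Suc (Suc n)) powr s) {0<..}"
    using has_integral_diff[OF has_integral_powr_exp_scaled[OF s, of "real (Suc n)"]
        has_integral_powr_exp_scaled[OF s, of "real (Suc (Suc n))"]]
    by (simp only: of_real_of_nat_eq zero_less_Suc of_nat_0_less_iff)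
  ultimately show ?thesis
    unfolding kernel_moment_def by (simp add: integral_unique)
qed

lemma kernel_moment_field_differentiable:
  assumes "norm s < 1/4"
  shows "(\<lambda>s. kernel_moment s n) field_differentiable at s"
  unfolding kernel_moment_def
  by (rule polylog_kernel_integral_field_differentiable[where K = 1])
     (use assms in \<open>auto intro!: continuous_intros\<close>)

lemma rGamma_mult_kernel_moment:
  assumes "norm s < 1/4"
  shows "rGamma s * kernel_moment s n = 1 / of_nat (Suc n) powr s - 1 / of_nat (Suc (Suc n)) powr s"
proof -
  let ?B = "ball (0::complex) (1/4)"
  let ?U = "?B \<inter> {s. Re s > 0}"
  have "(\<lambda>s. kernel_moment s n) holomorphic_on ?B"
    using kernel_moment_field_differentiable
    by (auto simp: holomorphic_on_def intro: field_differentiable_at_within)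
  then have hol_left: "(\<lambda>s. rGamma s * kernel_moment s n) holomorphic_on ?B"
    by (rule holomorphic_on_mult[OF holomorphic_rGamma])
  have hol_right: "(\<lambda>s. 1 / of_nat (Suc n) powr s - 1 / of_nat (Suc (Suc n)) powr s) holomorphic_on ?B"
    by (intro holomorphic_intros holomorphic_on_powr_right) auto
  have eq: "rGamma s * kernel_moment s n = 1 / of_nat (Suc n) powr s - 1 / of_nat (Suc (Suc n)) powr s"
    if "s \<in> ?U" for s
  proof -
    from that have "s \<notin> \<int>\<^sub>\<le>\<^sub>0" by (auto elim!: nonpos_Ints_cases')
    then have Gamma: "rGamma s * Gamma s = 1" by (simp add: Gamma_def rGamma_nonzero)
    have "rGamma s * kernel_moment s n = (rGamma s * Gamma s) / of_nat (Suc n) powr s -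
        (rGamma s * Gamma s) / of_nat (Suc (Suc n)) powr s"
      using kernel_moment_eq_Gamma[of s n] that by (simp add: right_diff_distrib)
    then show ?thesis by (simp only: Gamma)
  qed
  have "open ?U" by (intro open_Int open_ball open_halfspace_Re_gt)
  moreover have "?U \<noteq> {}" by (intro ex_in_conv[THEN iffD1] exI[of _ "1/8"]) auto
  moreover have "connected ?B" by (rule convex_connected) simp
  ultimately show ?thesis
    using analytic_continuation_open[of ?U ?B "\<lambda>s. rGamma s * kernel_moment s n"
        "\<lambda>s. 1 / of_nat (Suc n) powr s - 1 / of_nat (Suc (Suc n)) powr s" s]
      hol_left hol_right eq assms
    by auto
qed

lemma has_field_derivative_rGamma_mult_at_0:
  assumes "f field_differentiable at 0"
  shows "((\<lambda>s. rGamma s * f s) has_field_derivative f 0) (at 0)"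
proof -
  obtain D where D: "(f has_field_derivative D) (at 0)"
    using assms by (auto simp: field_differentiable_def)
  have "(rGamma has_field_derivative 1) (at 0)"
    using has_field_derivative_rGamma_nonpos_int[of 0 UNIV] by simp
  from DERIV_mult[OF this D] show ?thesis by simp
qed

lemma kernel_moment_0: "kernel_moment 0 n = Ln (of_nat (Suc (Suc n))) - Ln (of_nat (Suc n))"
proof -
  have "((\<lambda>s. rGamma s * kernel_moment s n) has_field_derivative kernel_moment 0 n) (at 0)"
    by (rule has_field_derivative_rGamma_mult_at_0[OF kernel_moment_field_differentiable]) simp
  then have "((\<lambda>s. 1 / of_nat (Suc n) powr s - 1 / of_nat (Suc (Suc n)) powr s)
               has_field_derivative kernel_moment 0 n) (at 0)"
    by (rule has_field_derivative_transform_within_open[OF _ open_ball[of 0 "1/4"]])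
       (auto simp: rGamma_mult_kernel_moment)
  moreover have "((\<lambda>s. 1 / of_nat (Suc n) powr s - 1 / of_nat (Suc (Suc n)) powr s)
      has_field_derivative Ln (of_nat (Suc (Suc n))) - Ln (of_nat (Suc n))) (at 0)"
    by (auto intro!: derivative_eq_intros simp del: of_nat_Suc)
  ultimately show ?thesis by (rule DERIV_unique)
qed

section \<open>The integral transform of the kernel\<close>

definition polylog_transform :: "complex \<Rightarrow> complex \<Rightarrow> complex" where
  "polylog_transform s z = integral {0<..} (\<lambda>t. polylog_kernel s t / (1 - z * of_real (exp (-t))))"

lemma slit_plane_inverse_one_minus_exp_bounded:
  assumes "z \<in> slit_plane"
  obtains K where "continuous_on {0<..} (\<lambda>t. 1 / (1 - z * of_real (exp (-t))))"
    "\<And>t. t > 0 \<Longrightarrow> norm (1 / (1 - z * of_real (exp (-t)))) \<le> K"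
proof -
  obtain c where c: "c > 0" "\<And>t. t \<ge> 0 \<Longrightarrow> c \<le> norm (1 - z * of_real (exp (-t)))"
    using slit_plane_exp_bounded_away_from_one[OF assms] by blast
  have "1 - z * of_real (exp (-t)) \<noteq> 0" if "t > 0" for t
    using c(1) c(2)[of t] that by auto
  then have "continuous_on {0<..} (\<lambda>t. 1 / (1 - z * of_real (exp (-t))))"
    by (auto intro!: continuous_intros)
  moreover have "norm (1 / (1 - z * of_real (exp (-t)))) \<le> 1 / c" if "t > 0" for t
    using c(1) c(2)[of t] that by (simp add: norm_divide frac_le)
  ultimately show ?thesis using that by blast
qed

lemma integrable_polylog_transform:
  assumes "z \<in> slit_plane" "norm s \<le> 1/4"
  shows "(\<lambda>t. polylog_kernel s t / (1 - z * of_real (exp (-t)))) integrable_on {0<..}"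
proof -
  obtain K where "continuous_on {0<..} (\<lambda>t. 1 / (1 - z * of_real (exp (-t))))"
    and "\<And>t. t > 0 \<Longrightarrow> norm (1 / (1 - z * of_real (exp (-t)))) \<le> K"
    using slit_plane_inverse_one_minus_exp_bounded[OF assms(1)] by blast
  from integrable_polylog_kernel_mult[OF assms(2) this] show ?thesis by simp
qed

lemma polylog_transform_field_differentiable:
  assumes "z \<in> slit_plane" "norm s < 1/4"
  shows "(\<lambda>s. polylog_transform s z) field_differentiable at s"
proof -
  obtain K where "continuous_on {0<..} (\<lambda>t. 1 / (1 - z * of_real (exp (-t))))"
    and "\<And>t. t > 0 \<Longrightarrow> norm (1 / (1 - z * of_real (exp (-t)))) \<le> K"
    using slit_plane_inverse_one_minus_exp_bounded[OF assms(1)] by blast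
  from polylog_kernel_integral_field_differentiable[OF this assms(2)] show ?thesis
    by (simp add: polylog_transform_def)
qed

lemma holomorphic_polylog_transform:
  assumes s: "norm s \<le> 1/4"
  shows "polylog_transform s holomorphic_on slit_plane"
proof -
  have "polylog_transform s field_differentiable at z0" if z0: "z0 \<in> slit_plane" for z0
  proof -
    obtain c r where c: "c > 0" "r > 0" "ball z0 r \<subseteq> slit_plane"
      and cb: "\<And>z t. z \<in> ball z0 r \<Longrightarrow> t \<ge> 0 \<Longrightarrow> c \<le> norm (1 - z * of_real (exp (-t)))"
      using slit_plane_locally_bounded_away_from_one[OF z0] by metis
    have "((\<lambda>z. polylog_transform s z) has_field_derivative integral {0<..}
            (\<lambda>t. polylog_kernel s t * of_real (exp (-t)) / (1 - z0 * of_real (exp (-t)))^2)) (at z0)"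
      unfolding polylog_transform_def
    proof (rule has_field_derivative_integral_dominated[OF c(2), where g = "\<lambda>t. kernel_majorant t / c^2"])
      show "(\<lambda>t. kernel_majorant t / c^2) integrable_on {0<..}"
        using kernel_majorant_integrable by (rule integrable_on_divide)
    next
      fix z assume "z \<in> ball z0 r"
      then show "(\<lambda>t. polylog_kernel s t / (1 - z * of_real (exp (-t)))) integrable_on {0<..}"
        using integrable_polylog_transform c(3) s by blast
    next
      fix z and t :: real assume z: "z \<in> ball z0 r" and t: "t \<in> {0<..}"
      have "1 - z * of_real (exp (-t)) \<noteq> 0" using cb[OF z, of t] c(1) t by auto
      then show "((\<lambda>z. polylog_kernel s t / (1 - z * of_real (exp (-t)))) has_field_derivative
              polylog_kernel s t * of_real (exp (-t)) / (1 - z * of_real (exp (-t)))^2) (at z)"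
        by (auto intro!: derivative_eq_intros simp: power2_eq_square)
      have "norm (polylog_kernel s t * of_real (exp (-t))) \<le> kernel_majorant t"
        using norm_polylog_kernel_le_majorant[of t s] t s
        by (simp add: norm_mult mult_le_one order_trans[OF mult_right_le_one_le])
      moreover have "c^2 \<le> norm ((1 - z * of_real (exp (-t)))^2)"
        using cb[OF z, of t] t c(1) by (simp add: norm_power power_mono)
      ultimately show "norm (polylog_kernel s t * of_real (exp (-t)) / (1 - z * of_real (exp (-t)))^2)
          \<le> kernel_majorant t / c^2"
        unfolding norm_divide using c(1) kernel_majorant_nonneg[of t] by (intro frac_le) auto
    qed
    then show ?thesis unfolding field_differentiable_def by blast
  qed
  then show ?thesis
    unfolding holomorphic_on_def by (auto intro: field_differentiable_at_within)
qed

lemma sums_kernel_moments: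
  assumes "z \<in> slit_plane" "norm z \<le> 1" "norm s \<le> 1/4"
  shows "(\<lambda>n. z ^ n * kernel_moment s n) sums polylog_transform s z"
  unfolding kernel_moment_def polylog_transform_def
  by (rule sums_integral_geometric_exp[OF continuous_on_polylog_kernel kernel_majorant_integrable _ assms(1,2)])
     (use norm_polylog_kernel_le_majorant assms(3) in auto)

section \<open>The polylogarithm near s = 0\<close>

lemma summable_Suc_mult_power:
  fixes x :: real
  assumes "norm x < 1"
  shows "summable (\<lambda>n. real (Suc n) * x ^ n)"
proof -
  have "summable (\<lambda>n. diffs (\<lambda>n. 1::real) n * x ^ n)"
    by (rule termdiff_converges[of x 1]) (use assms in \<open>auto simp: summable_geometric\<close>)
  then show ?thesis by (simp add: diffs_def)
qed

lemma summable_power_mult_linearly_bounded: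
  fixes z :: complex
  assumes "norm z < 1" "\<And>n. norm (a n) \<le> real (Suc n)"
  shows "summable (\<lambda>n. z ^ n * a n)"
proof (rule summable_comparison_test'[where g = "\<lambda>n. real (Suc n) * norm z ^ n" and N = 0])
  show "summable (\<lambda>n. real (Suc n) * norm z ^ n)"
    using assms(1) by (intro summable_Suc_mult_power) simp
  fix n
  have "norm (a n) * norm z ^ n \<le> real (Suc n) * norm z ^ n"
    using assms(2)[of n] by (intro mult_right_mono) auto
  then show "norm (z ^ n * a n) \<le> real (Suc n) * norm z ^ n"
    by (simp add: norm_mult norm_power mult.commute)
qed

lemma summable_polylog_series:
  fixes s z :: complex
  assumes s: "Re s \<ge> -1" and z: "norm z < 1"
  shows "summable (\<lambda>n. z ^ Suc n / of_nat (Suc n) powr s)"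
proof -
  have "norm (z / of_nat (Suc n) powr s) \<le> real (Suc n)" for n
  proof -
    have "norm (of_nat (Suc n) powr s :: complex) = real (Suc n) powr Re s"
      by (subst norm_powr_real_powr) auto
    then have "norm (z / of_nat (Suc n) powr s) = norm z * real (Suc n) powr (- Re s)"
      by (simp only: norm_divide norm_mult norm_inverse powr_minus divide_inverse)
    also have "\<dots> \<le> 1 * real (Suc n) powr 1"
      using z s by (intro mult_mono powr_mono) auto
    finally show ?thesis by simp
  qed
  then have "summable (\<lambda>n. z ^ n * (z / of_nat (Suc n) powr s))"
    using z by (intro summable_power_mult_linearly_bounded)
  then show ?thesis by (simp add: mult.commute)
qed

definition polylog_repr :: "complex \<Rightarrow> complex \<Rightarrow> complex" where
  "polylog_repr s z = (if z \<in> slit_plane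
     then z / (1 - z) - z^2 / (1 - z) * (rGamma s * polylog_transform s z) else 0)"

lemma polylog_repr_eq_series:
  fixes s z :: complex
  assumes s: "norm s < 1/4" and z: "norm z < 1"
  shows "polylog_repr s z = (\<Sum>n. z ^ Suc n / of_nat (Suc n) powr s)"
proof -
  have zs: "z \<in> slit_plane" using z by (rule norm_less_one_in_slit_plane)
  define a where "a = (\<lambda>n. z ^ Suc n / of_nat (Suc n) powr s)"
  define A where "A = suminf a"
  define d where "d = (\<lambda>n. 1 / of_nat (Suc n) powr s - 1 / of_nat (Suc (Suc n)) powr s :: complex)"
  define R where "R = rGamma s * polylog_transform s z"
  have "(\<lambda>n. rGamma s * (z ^ n * kernel_moment s n)) sums R"
    unfolding R_def using zs z s by (intro sums_mult sums_kernel_moments) auto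
  moreover have "rGamma s * (z ^ n * kernel_moment s n) = z ^ n * d n" for n
    using rGamma_mult_kernel_moment[OF s, of n] by (simp add: d_def mult.left_commute)
  ultimately have "(\<lambda>n. z^2 * (z ^ n * d n)) sums (z^2 * R)"
    by (simp add: sums_mult)
  moreover have "Re s \<ge> -1" using abs_Re_le_cmod[of s] s by linarith
  then have "a sums A"
    using summable_polylog_series[OF _ z] by (simp add: a_def A_def summable_sums)
  then have "(\<lambda>n. z * a n - a (Suc n)) sums (z * A - (A - z))"
    using sums_Suc_iff[of a "A - z"] by (intro sums_diff sums_mult) (auto simp: a_def)
  moreover have "z * a n - a (Suc n) = z^2 * (z ^ n * d n)" for n
    by (simp add: a_def d_def algebra_simps power2_eq_square)
  ultimately have telescope: "z^2 * R = z * A - (A - z)"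
    using sums_unique2 by force
  have "polylog_repr s z = (z - z^2 * R) / (1 - z)"
    using zs by (simp add: polylog_repr_def R_def diff_divide_distrib)
  also have "\<dots> = (A - z * A) / (1 - z)"
    unfolding telescope by (simp add: algebra_simps)
  also have "\<dots> = A"
    using slit_plane_one_minus_nonzero[OF zs] by (simp add: field_simps)
  finally show ?thesis by (simp add: A_def a_def)
qed

lemma holomorphic_polylog_repr:
  assumes "norm s < 1/4"
  shows "polylog_repr s holomorphic_on slit_plane"
proof -
  have "(\<lambda>z. z / (1 - z) - z^2 / (1 - z) * (rGamma s * polylog_transform s z)) holomorphic_on slit_plane"
    using holomorphic_polylog_transform[of s] assms slit_plane_one_minus_nonzero
    by (intro holomorphic_intros) auto
  then show ?thesis
    by (rule holomorphic_transform) (simp add: polylog_repr_def)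
qed

lemma polylog_eqI:
  assumes f: "f holomorphic_on slit_plane"
    and series: "\<And>z. norm z < 1 \<Longrightarrow> f z = (\<Sum>n. z ^ Suc n / of_nat (Suc n) powr s)"
    and outside: "\<And>z. z \<notin> slit_plane \<Longrightarrow> f z = 0"
  shows "polylog s = f"
  unfolding polylog_def
proof (rule the_equality)
  fix g assume g: "g holomorphic_on slit_plane \<and>
      (\<forall>z. norm z < 1 \<longrightarrow> g z = (\<Sum>n. z ^ Suc n / of_nat (Suc n) powr s)) \<and>
      (\<forall>z. z \<notin> slit_plane \<longrightarrow> g z = 0)"
  show "g = f"
  proof
    fix z
    show "g z = f z"
    proof (cases "z \<in> slit_plane")
      case True
      have "ball 0 1 \<subseteq> slit_plane" using norm_less_one_in_slit_plane by auto
      then show ?thesis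
        by (rule analytic_continuation_open[of "ball 0 1" slit_plane g f z, rotated 4])
           (use g f series True open_slit_plane connected_slit_plane in auto)
    qed (use g outside in auto)
  qed
qed (use f series outside in auto)

lemma polylog_eq_polylog_repr:
  assumes "norm s < 1/4"
  shows "polylog s = polylog_repr s"
  using assms holomorphic_polylog_repr polylog_repr_eq_series
  by (intro polylog_eqI) (auto simp: polylog_repr_def)

lemma polylog0'_eq:
  assumes z: "z \<in> slit_plane"
  shows "polylog0' z = - (z^2 / (1 - z)) * polylog_transform 0 z"
proof -
  have "((\<lambda>s. rGamma s * polylog_transform s z) has_field_derivative polylog_transform 0 z) (at 0)"
    by (rule has_field_derivative_rGamma_mult_at_0[OF polylog_transform_field_differentiable[OF z]]) simp
  then have "((\<lambda>s. z / (1 - z) - z^2 / (1 - z) * (rGamma s * polylog_transform s z))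
      has_field_derivative 0 - z^2 / (1 - z) * polylog_transform 0 z) (at 0)"
    by (intro DERIV_diff DERIV_const DERIV_cmult)
  then have "((\<lambda>s. polylog s z) has_field_derivative 0 - z^2 / (1 - z) * polylog_transform 0 z) (at 0)"
    by (rule has_field_derivative_transform_within_open[OF _ open_ball[of 0 "1/4"]])
       (auto simp: polylog_eq_polylog_repr polylog_repr_def z)
  then show ?thesis
    unfolding polylog0'_def by (simp add: DERIV_imp_deriv)
qed

section \<open>The generalized Euler constant function\<close>

definition log_transform :: "complex \<Rightarrow> complex" where
  "log_transform z = integral {0<..} (\<lambda>t. of_real (exp (-t)) / (1 - z * of_real (exp (-t))))"

lemma has_integral_log_transform:
  assumes "z \<in> slit_plane"
  shows "((\<lambda>t. of_real (exp (-t)) / (1 - z * of_real (exp (-t)))) has_integral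
           integral {0..1} (\<lambda>x. 1 / (1 - of_real x * z))) {0<..}"
proof -
  have "continuous_on {0..1} (\<lambda>x::real. 1 / (1 - of_real x * z))"
    using slit_plane_one_minus_nonzero[OF of_real_mult_in_slit_plane[OF assms]]
    by (auto intro!: continuous_intros)
  from has_integral_exp_neg_substitution[OF this] show ?thesis
    by (simp add: scaleR_conv_of_real mult.commute)
qed

lemma log_transform_eq:
  assumes z: "z \<in> slit_plane"
  shows "z * log_transform z = - Ln (1 - z)"
proof (cases "z = 0")
  case False
  define F where "F = (\<lambda>x::real. - Ln (1 - of_real x * z) / z)"
  have "((\<lambda>x. 1 / (1 - of_real x * z)) has_integral F 1 - F 0) {0..1}"
  proof (rule fundamental_theorem_of_calculus)
    fix x :: real assume x: "x \<in> {0..1}"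
    have "1 - of_real x * z \<notin> \<real>\<^sub>\<le>\<^sub>0"
      using of_real_mult_in_slit_plane[OF z x] by (simp add: one_minus_in_nonpos_Reals_iff)
    then have "((\<lambda>w. Ln (1 - w * z)) has_field_derivative inverse (1 - of_real x * z) * (- z)) (at (of_real x))"
      by (auto intro!: derivative_eq_intros)
    from DERIV_cdivide[OF DERIV_minus[OF this], of z]
    have "((\<lambda>w. - Ln (1 - w * z) / z) has_field_derivative inverse (1 - of_real x * z)) (at (of_real x))"
      using False by simp
    then show "(F has_vector_derivative 1 / (1 - of_real x * z)) (at x within {0..1})"
      unfolding F_def inverse_eq_divide by (rule has_vector_derivative_real_field)
  qed simp
  then have "log_transform z = F 1 - F 0"
    using has_integral_log_transform[OF z] by (simp add: log_transform_def integral_unique)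
  then show ?thesis using False by (simp add: F_def)
qed simp

text \<open>The integrand of the integral for gen_euler_gamma without its factor 1 / (1 - x z),
  extended continuously to x = 0; at x = 1 the junk value 0 / 0 = 0 is already the limit.\<close>
definition gamma_weight :: "real \<Rightarrow> real" where
  "gamma_weight x = (if x = 0 then 1 else (1 - x + ln x) / ln x)"

lemma continuous_on_gamma_weight: "continuous_on {0..1} gamma_weight"
proof -
  have "continuous (at x within {0..1}) gamma_weight" if x: "x \<in> {0..1}" for x
  proof -
    consider "x = 0" | "x = 1" | "0 < x" "x < 1" using x by fastforce
    then show ?thesis
    proof cases
      case 1
      have "((\<lambda>x::real. (1 - x + ln x) / ln x) \<longlongrightarrow> 1) (at_right 0)" by real_asymp
      then have "(gamma_weight \<longlongrightarrow> 1) (at_right 0)"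
        by (rule Lim_transform_eventually)
           (use eventually_at_right_less[of "0::real"] in \<open>eventually_elim, simp add: gamma_weight_def\<close>)
      then show ?thesis using 1 by (simp add: continuous_within at_within_Icc_at_right gamma_weight_def)
    next
      case 2
      have "((\<lambda>x::real. (1 - x + ln x) / ln x) \<longlongrightarrow> 0) (at_left 1)" by real_asymp
      then have "(gamma_weight \<longlongrightarrow> 0) (at_left 1)"
        by (rule Lim_transform_eventually)
           (use eventually_at_left_real[of 0 "1::real", OF zero_less_one] in
             \<open>eventually_elim, auto simp: gamma_weight_def\<close>)
      then show ?thesis using 2 by (simp add: continuous_within at_within_Icc_at_left gamma_weight_def)
    next
      case 3
      then have "continuous (at x within {0..1}) (\<lambda>x. (1 - x + ln x) / ln x)"
        by (intro continuous_intros) auto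
      then show ?thesis
        by (rule continuous_transform_within[where \<delta> = x]) (use 3 in \<open>auto simp: gamma_weight_def dist_real_def\<close>)
    qed
  qed
  then show ?thesis by (simp add: continuous_on_eq_continuous_within)
qed

lemma exp_mult_gamma_weight_exp:
  assumes "t > 0"
  shows "exp (-t) * gamma_weight (exp (-t)) = exp (-t) - exp (-t) * (1 - exp (-t)) / t"
  using assms by (simp add: gamma_weight_def field_simps)

lemma gen_euler_gamma_integral_eq:
  assumes z: "z \<in> slit_plane"
  shows "integral {0..1} (\<lambda>x. of_real (1 - x + ln x) / ((1 - of_real x * z) * of_real (ln x))) =
           log_transform z - polylog_transform 0 z"
proof -
  define F where "F = (\<lambda>x. of_real (gamma_weight x) / (1 - of_real x * z))"
  have "integral {0..1} (\<lambda>x. of_real (1 - x + ln x) / ((1 - of_real x * z) * of_real (ln x))) =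
      integral {0..1} F"
    by (rule integral_spike[of "{0}"]) (auto simp: F_def gamma_weight_def divide_divide_eq_left mult.commute)
  moreover have "continuous_on {0..1} F"
    unfolding F_def using slit_plane_one_minus_nonzero[OF of_real_mult_in_slit_plane[OF z]]
    by (intro continuous_intros continuous_on_of_real continuous_on_gamma_weight) auto
  note has_integral_exp_neg_substitution[OF this]
  moreover have "exp (-t) *\<^sub>R F (exp (-t)) =
      of_real (exp (-t)) / (1 - z * of_real (exp (-t))) - polylog_kernel 0 t / (1 - z * of_real (exp (-t)))"
    if "t \<in> {0<..}" for t
  proof -
    have "exp (-t) *\<^sub>R F (exp (-t)) =
        of_real (exp (-t) * gamma_weight (exp (-t))) / (1 - z * of_real (exp (-t)))"
      by (simp add: F_def scaleR_conv_of_real mult.commute)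
    also have "\<dots> = (of_real (exp (-t)) - polylog_kernel 0 t) / (1 - z * of_real (exp (-t)))"
      using that by (simp add: exp_mult_gamma_weight_exp polylog_kernel_0)
    finally show ?thesis by (simp add: diff_divide_distrib)
  qed
  moreover have "((\<lambda>t. of_real (exp (-t)) / (1 - z * of_real (exp (-t))) -
      polylog_kernel 0 t / (1 - z * of_real (exp (-t)))) has_integral log_transform z - polylog_transform 0 z) {0<..}"
    unfolding log_transform_def polylog_transform_def
    using has_integral_log_transform[OF z] integrable_polylog_transform[OF z, of 0]
    by (intro has_integral_diff) (auto simp: integrable_integral integral_unique)
  ultimately show ?thesis
    using has_integral_cong has_integral_unique by (metis (no_types, lifting))
qed

lemma gen_euler_gamma_eq:
  assumes z: "z \<in> slit_plane"
  shows "gen_euler_gamma z = log_transform z - polylog_transform 0 z"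
proof (cases "norm z \<le> 1")
  case True
  have "(\<lambda>n. z ^ n * integral {0<..} (\<lambda>t. of_real (exp (-t)) * of_real (exp (- (real n * t))))) sums
      log_transform z"
    unfolding log_transform_def
    by (rule sums_integral_geometric_exp[OF _ kernel_majorant_integrable _ z True])
       (auto intro!: continuous_intros simp: exp_le_kernel_majorant)
  then have "(\<lambda>n. z ^ n * (1 / of_nat (Suc n))) sums log_transform z"
    by (simp only: has_integral_exp_neg_mult_exp[THEN integral_unique])
  from sums_diff[OF this sums_kernel_moments[OF z True, of 0]]
  have "(\<lambda>n. z ^ n * (1 / of_nat (Suc n) - Ln (of_nat (Suc (Suc n)) / of_nat (Suc n))))
      sums (log_transform z - polylog_transform 0 z)"
    by (simp add: kernel_moment_0 Ln_of_nat_over_of_nat right_diff_distrib del: of_nat_Suc)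
  then show ?thesis
    using True by (simp add: gen_euler_gamma_def sums_unique[symmetric])
next
  case False
  then show ?thesis
    using gen_euler_gamma_integral_eq[OF z] by (simp add: gen_euler_gamma_def)
qed

lemma times_polylog_transform_0:
  assumes z: "norm z < 1"
  shows "z * polylog_transform 0 z = (1 - z) * (\<Sum>n. z ^ n * Ln (of_nat (Suc n)))"
proof -
  define b where "b = (\<lambda>n. Ln (of_nat (Suc n)) :: complex)"
  define B where "B = (\<Sum>n. z ^ n * b n)"
  have "norm (b n) \<le> real (Suc n)" for n
    using ln_le_minus_one[of "real (Suc n)"] by (simp add: b_def)
  then have B: "(\<lambda>n. z ^ n * b n) sums B"
    using summable_power_mult_linearly_bounded[OF z] by (simp add: B_def summable_sums)
  then have "(\<lambda>n. z ^ Suc n * b (Suc n) - z * (z ^ n * b n)) sums (B - z * B)"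
    using sums_Suc_iff[of "\<lambda>n. z ^ n * b n" B] by (intro sums_diff sums_mult) (auto simp: b_def)
  moreover have "(\<lambda>n. z * (z ^ n * kernel_moment 0 n)) sums (z * polylog_transform 0 z)"
    using z norm_less_one_in_slit_plane[OF z] by (intro sums_mult sums_kernel_moments) auto
  moreover have "z * (z ^ n * kernel_moment 0 n) = z ^ Suc n * b (Suc n) - z * (z ^ n * b n)" for n
    by (simp add: kernel_moment_0 b_def algebra_simps del: of_nat_Suc)
  ultimately have "z * polylog_transform 0 z = B - z * B"
    using sums_unique2 by force
  then show ?thesis by (simp add: B_def b_def algebra_simps)
qed

theorem theorem8:
  shows "(\<forall>z\<in>slit_plane.
            z\<^sup>2 * gen_euler_gamma z = (1 - z) * polylog0' z - z * Ln (1 - z))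
       \<and> (\<forall>z::complex. norm z < 1 \<longrightarrow>
            z * gen_euler_gamma z =
              - Ln (1 - z) - (1 - z) * (\<Sum>n. z ^ n * Ln (of_nat (Suc n))))"
proof (intro conjI ballI allI impI)
  fix z assume z: "z \<in> slit_plane"
  have "z\<^sup>2 * gen_euler_gamma z = z * (z * log_transform z) - z^2 * polylog_transform 0 z"
    by (simp add: gen_euler_gamma_eq[OF z] power2_eq_square algebra_simps)
  also have "\<dots> = (1 - z) * polylog0' z - z * Ln (1 - z)"
    using slit_plane_one_minus_nonzero[OF z]
    by (simp add: log_transform_eq[OF z] polylog0'_eq[OF z] field_simps)
  finally show "z\<^sup>2 * gen_euler_gamma z = (1 - z) * polylog0' z - z * Ln (1 - z)" .
next
  fix z :: complex assume z: "norm z < 1"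
  then have "z \<in> slit_plane" by (rule norm_less_one_in_slit_plane)
  then show "z * gen_euler_gamma z = - Ln (1 - z) - (1 - z) * (\<Sum>n. z ^ n * Ln (of_nat (Suc n)))"
    using times_polylog_transform_0[OF z]
    by (simp add: gen_euler_gamma_eq log_transform_eq right_diff_distrib)
qed

end
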